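(* Let $\ell$ be a prime and $n$ a positive integer. Suppose that $\mathcal{O}$ is an imaginary quadratic order of conductor coprime to $\ell$ in which $\ell$ splits into two distinct prime ideals whose classes have order $n$ in $\mathrm{Cl}(\mathcal{O})$. Then the discriminant $D(\mathcal{O})$ of $\mathcal{O}$ satisfies $|D(\mathcal{O})|\le 4\ell^n-1$.
   Context: $\mathrm{Cl}(\mathcal{O})$ denotes the class group (of invertible ideals) of the order $\mathcal{O}$. *)

theory Defs
  imports Complex_Main "HOL-Computational_Algebra.Primes"
begin

text \<open>D is the discriminant of an imaginary quadratic order iff D < 0 and D = 0 or 1 mod 4.
  Every imaginary quadratic order is (up to the embedding into the complex numbers)
  the order Z[tau] with tau = (D + sqrt D)/2 for a unique such D, which is its discriminant.\<close>

definition imag_quad_disc :: "int \<Rightarrow> bool" where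
  "imag_quad_disc D \<longleftrightarrow> D < 0 \<and> (D mod 4 = 0 \<or> D mod 4 = 1)"

definition quad_tau :: "int \<Rightarrow> complex" where
  "quad_tau D = (of_int D + \<i> * complex_of_real (sqrt (real_of_int (- D)))) / 2"

definition quad_order :: "int \<Rightarrow> complex set" where
  "quad_order D = {of_int a + of_int b * quad_tau D | a b :: int. True}"

text \<open>Conductor: D = f^2 d_K with d_K the fundamental discriminant, i.e. f is the largest
  positive integer with f^2 dividing D and D / f^2 again a discriminant (0 or 1 mod 4).\<close>

definition conductor :: "int \<Rightarrow> int" where
  "conductor D = (GREATEST f. f > 0 \<and> f^2 dvd D \<and> ((D div f^2) mod 4 = 0 \<or> (D div f^2) mod 4 = 1))"

inductive_set add_span :: "complex set \<Rightarrow> complex set" for S where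
  zero: "0 \<in> add_span S"
| base: "x \<in> S \<Longrightarrow> x \<in> add_span S"
| add: "x \<in> add_span S \<Longrightarrow> y \<in> add_span S \<Longrightarrow> x + y \<in> add_span S"
| neg: "x \<in> add_span S \<Longrightarrow> - x \<in> add_span S"

definition ideal_prod :: "complex set \<Rightarrow> complex set \<Rightarrow> complex set" where
  "ideal_prod A B = add_span {a * b | a b. a \<in> A \<and> b \<in> B}"

primrec ideal_pow :: "complex set \<Rightarrow> complex set \<Rightarrow> nat \<Rightarrow> complex set" where
  "ideal_pow R I 0 = R"
| "ideal_pow R I (Suc k) = ideal_prod (ideal_pow R I k) I"

definition principal :: "complex set \<Rightarrow> complex \<Rightarrow> complex set" where
  "principal R \<alpha> = (\<lambda>x. \<alpha> * x) ` R"

definition is_principal :: "complex set \<Rightarrow> complex set \<Rightarrow> bool" where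
  "is_principal R I \<longleftrightarrow> (\<exists>\<alpha>. \<alpha> \<noteq> 0 \<and> I = principal R \<alpha>)"

definition O_submodule :: "complex set \<Rightarrow> complex set \<Rightarrow> bool" where
  "O_submodule R M \<longleftrightarrow> 0 \<in> M \<and> (\<forall>x\<in>M. \<forall>y\<in>M. x + y \<in> M) \<and> (\<forall>x\<in>M. - x \<in> M)
     \<and> (\<forall>r\<in>R. \<forall>x\<in>M. r * x \<in> M)"

definition int_ideal :: "complex set \<Rightarrow> complex set \<Rightarrow> bool" where
  "int_ideal R I \<longleftrightarrow> O_submodule R I \<and> I \<subseteq> R \<and> I \<noteq> {0}"

definition frac_ideal :: "complex set \<Rightarrow> complex set \<Rightarrow> bool" where
  "frac_ideal R M \<longleftrightarrow> O_submodule R M \<and> M \<noteq> {0}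
     \<and> (\<exists>d\<in>R. d \<noteq> 0 \<and> (\<lambda>x. d * x) ` M \<subseteq> R)"

definition invertible_ideal :: "complex set \<Rightarrow> complex set \<Rightarrow> bool" where
  "invertible_ideal R M \<longleftrightarrow> frac_ideal R M \<and> (\<exists>N. frac_ideal R N \<and> ideal_prod M N = R)"

definition prime_ideal :: "complex set \<Rightarrow> complex set \<Rightarrow> bool" where
  "prime_ideal R P \<longleftrightarrow> int_ideal R P \<and> P \<noteq> R
     \<and> (\<forall>x\<in>R. \<forall>y\<in>R. x * y \<in> P \<longrightarrow> x \<in> P \<or> y \<in> P)"

text \<open>The class of the invertible ideal I has order n in Cl(R) (invertible ideals modulo
  principal ideals): n is the least positive exponent with I^n principal.\<close>
definition class_order :: "complex set \<Rightarrow> complex set \<Rightarrow> nat \<Rightarrow> bool" where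
  "class_order R I n \<longleftrightarrow> invertible_ideal R I \<and> n > 0 \<and> is_principal R (ideal_pow R I n)
     \<and> (\<forall>m. 0 < m \<and> m < n \<longrightarrow> \<not> is_principal R (ideal_pow R I m))"

end

theory Submission
  imports Defs
begin

(* Suppose |D| >= 4 l^n and write P^n = (alpha), Q^n = (beta).  Since l^n lies in
   P^n Q^n, which is contained in (alpha beta), and nonzero elements of the order have
   absolute value at least 1, we get |alpha| |beta| <= l^n; so one generator, say alpha,
   satisfies |alpha|^2 <= l^n <= |D|/4.  An element this short is either a rational
   integer, hence divisible by l because it lies in P, or purely imaginary with
   alpha^2 = -l^n.  Either way alpha lies in Q as well, so P is contained in Q.  But
   distinct prime ideals containing l are incomparable, because the order modulo l is
   finite; hence P = Q. *)

lemma O_submodule_mult_mem: "O_submodule R M \<Longrightarrow> r \<in> R \<Longrightarrow> x \<in> M \<Longrightarrow> r * x \<in> M"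
  by (simp add: O_submodule_def)

lemma O_submodule_diff_mem: "O_submodule R M \<Longrightarrow> x \<in> M \<Longrightarrow> y \<in> M \<Longrightarrow> x - y \<in> M"
  unfolding O_submodule_def by (metis diff_conv_add_uminus)

lemma add_span_subset_submodule:
  assumes "S \<subseteq> M" "O_submodule R M"
  shows "add_span S \<subseteq> M"
proof
  fix x assume "x \<in> add_span S"
  then show "x \<in> M"
    by induction (use assms in \<open>auto simp: O_submodule_def\<close>)
qed

lemma mem_ideal_prod: "a \<in> A \<Longrightarrow> b \<in> B \<Longrightarrow> a * b \<in> ideal_prod A B"
  unfolding ideal_prod_def by (rule add_span.base) blast

lemma ideal_prod_commute: "ideal_prod A B = ideal_prod B A"
  unfolding ideal_prod_def by (metis mult.commute)

lemma ideal_prod_subset_right: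
  assumes "A \<subseteq> R" "O_submodule R B"
  shows "ideal_prod A B \<subseteq> B"
  unfolding ideal_prod_def
  by (rule add_span_subset_submodule[OF _ assms(2)]) (use assms in \<open>auto simp: O_submodule_def\<close>)

lemma ideal_prod_subset_Int:
  assumes "int_ideal R P" "int_ideal R Q"
  shows "ideal_prod P Q \<subseteq> P \<inter> Q"
  using ideal_prod_subset_right[of P R Q] ideal_prod_subset_right[of Q R P] ideal_prod_commute[of P Q] assms
  by (auto simp: int_ideal_def)

lemma ideal_pow_subset_carrier:
  assumes "int_ideal R P"
  shows "ideal_pow R P k \<subseteq> R"
proof (induction k)
  case (Suc k)
  have "ideal_prod (ideal_pow R P k) P \<subseteq> P"
    using ideal_prod_subset_right[OF Suc] assms by (simp add: int_ideal_def)
  then show ?case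
    using assms by (auto simp: int_ideal_def)
qed simp

lemma ideal_pow_subset:
  assumes "int_ideal R P" "0 < k"
  shows "ideal_pow R P k \<subseteq> P"
  using assms ideal_prod_subset_right[OF ideal_pow_subset_carrier[OF assms(1)]]
  by (cases k) (auto simp: int_ideal_def)

lemma mult_mem_ideal_prod_ideal_prod:
  assumes x: "x \<in> ideal_prod A B" and y: "y \<in> ideal_prod C E"
  shows "x * y \<in> ideal_prod (ideal_prod A C) (ideal_prod B E)"
proof -
  let ?T = "ideal_prod (ideal_prod A C) (ideal_prod B E)"
  have T: "0 \<in> ?T" "\<And>u v. u \<in> ?T \<Longrightarrow> v \<in> ?T \<Longrightarrow> u + v \<in> ?T" "\<And>u. u \<in> ?T \<Longrightarrow> - u \<in> ?T"
    unfolding ideal_prod_def[of "ideal_prod A C"] by (auto intro: add_span.intros)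
  have generators: "a * b * y \<in> ?T" if "a \<in> A" "b \<in> B" for a b
    using y unfolding ideal_prod_def[of C E]
  proof induction
    case (base z)
    then obtain c e where "z = c * e" "c \<in> C" "e \<in> E" by blast
    then have "a * b * z = (a * c) * (b * e)" "a * c \<in> ideal_prod A C" "b * e \<in> ideal_prod B E"
      using that by (auto simp: mult_ac intro: mem_ideal_prod)
    then show ?case by (metis mem_ideal_prod)
  qed (use T in \<open>auto simp: distrib_left\<close>)
  show ?thesis
    using x unfolding ideal_prod_def[of A B]
    by induction (use T generators in \<open>auto simp: distrib_right\<close>)
qed

locale complex_subring =
  fixes R :: "complex set"
  assumes one_mem: "1 \<in> R"
    and diff_mem: "x \<in> R \<Longrightarrow> y \<in> R \<Longrightarrow> x - y \<in> R"
    and mult_mem: "x \<in> R \<Longrightarrow> y \<in> R \<Longrightarrow> x * y \<in> R"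
begin

lemma zero_mem: "0 \<in> R"
  using diff_mem[OF one_mem one_mem] by simp

lemma uminus_mem: "x \<in> R \<Longrightarrow> - x \<in> R"
  using diff_mem[OF zero_mem] by fastforce

lemma add_mem: "x \<in> R \<Longrightarrow> y \<in> R \<Longrightarrow> x + y \<in> R"
  using diff_mem[OF _ uminus_mem] by fastforce

lemma of_nat_mem: "of_nat k \<in> R"
  by (induction k) (auto intro: zero_mem add_mem one_mem)

lemma of_int_mem: "of_int k \<in> R"
  by (cases k rule: int_cases) (use of_nat_mem uminus_mem in \<open>auto simp del: of_nat_Suc\<close>)

lemma power_mem: "x \<in> R \<Longrightarrow> x ^ k \<in> R"
  by (induction k) (auto intro: one_mem mult_mem)

lemma principal_submodule: "O_submodule R (principal R c)"
proof -
  have mem: "c * u \<in> principal R c" if "u \<in> R" for u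
    using that by (auto simp: principal_def)
  have "c * u + c * v \<in> principal R c" "- (c * u) \<in> principal R c"
    "r * (c * u) \<in> principal R c" if "r \<in> R" "u \<in> R" "v \<in> R" for r u v
    using mem[OF add_mem[OF that(2,3)]] mem[OF uminus_mem[OF that(2)]] mem[OF mult_mem[OF that(1,2)]]
    by (simp_all add: distrib_left mult.left_commute)
  moreover have "0 \<in> principal R c"
    using mem[OF zero_mem] by simp
  ultimately show ?thesis
    unfolding O_submodule_def by (auto simp: principal_def)
qed

lemma principal_prod_subset: "ideal_prod (principal R a) (principal R b) \<subseteq> principal R (a * b)"
  unfolding ideal_prod_def
proof (rule add_span_subset_submodule[OF _ principal_submodule])
  show "{x * y |x y. x \<in> principal R a \<and> y \<in> principal R b} \<subseteq> principal R (a * b)"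
    by (auto simp: principal_def mult_ac intro!: image_eqI mult_mem)
qed

lemma power_mem_ideal_pow: "x \<in> P \<Longrightarrow> x ^ k \<in> ideal_pow R P k"
proof (induction k)
  case (Suc k)
  then show ?case by (metis ideal_pow.simps(2) mem_ideal_prod power_Suc2)
qed (simp add: one_mem)

lemma power_mem_ideal_prod_ideal_pow:
  assumes "x \<in> ideal_prod P Q"
  shows "x ^ k \<in> ideal_prod (ideal_pow R P k) (ideal_pow R Q k)"
proof (induction k)
  case 0 then show ?case using mem_ideal_prod[OF one_mem one_mem] by simp
next
  case (Suc k)
  then show ?case using mult_mem_ideal_prod_ideal_prod[OF Suc assms] by (simp add: mult.commute)
qed

lemma prime_ideal_one_notin:
  assumes "prime_ideal R P"
  shows "1 \<notin> P"
proof
  assume "1 \<in> P"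
  have "r \<in> P" if "r \<in> R" for r
    using O_submodule_mult_mem[of R P r 1] assms that \<open>1 \<in> P\<close> by (simp add: prime_ideal_def int_ideal_def)
  then have "R \<subseteq> P" by blast
  moreover have "P \<subseteq> R" "P \<noteq> R" using assms by (auto simp: prime_ideal_def int_ideal_def)
  ultimately show False by blast
qed

lemma prime_ideal_power_mem:
  assumes "prime_ideal R P" "x \<in> R" "x ^ k \<in> P"
  shows "x \<in> P"
  using assms(3)
proof (induction k)
  case 0 then show ?case using prime_ideal_one_notin[OF assms(1)] by simp
next
  case (Suc k)
  then have "x \<in> P \<or> x ^ k \<in> P"
    using assms(1,2) power_mem[OF assms(2)] unfolding prime_ideal_def by simp
  then show ?case using Suc.IH by blast
qed

lemma prime_ideal_int_dvd:
  assumes "prime_ideal R P" "prime l" "of_nat l \<in> P" "of_int a \<in> P"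
  shows "int l dvd a"
proof (rule ccontr)
  assume "\<not> int l dvd a"
  then have "coprime (int l) a"
    using assms(2) by (intro prime_imp_coprime) auto
  then obtain u v where uv: "u * int l + v * a = 1"
    by (metis bezout_int coprime_iff_gcd_eq_1)
  have sub: "O_submodule R P"
    using assms(1) by (simp add: prime_ideal_def int_ideal_def)
  have "of_int u * of_nat l + of_int v * of_int a \<in> P"
    using sub O_submodule_mult_mem[OF sub of_int_mem assms(3)] O_submodule_mult_mem[OF sub of_int_mem assms(4)]
    by (simp add: O_submodule_def)
  also have "of_int u * of_nat l + of_int v * of_int a = (1 :: complex)"
    using arg_cong[OF uv, of "of_int :: int \<Rightarrow> complex"] by simp
  finally show False
    using prime_ideal_one_notin[OF assms(1)] by simp
qed

lemma prime_ideal_subset_if_ideal_pow_principal: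
  assumes "P \<subseteq> R" "ideal_pow R P n = principal R \<alpha>" "\<alpha> \<in> Q" "prime_ideal R Q"
  shows "P \<subseteq> Q"
proof
  fix x assume "x \<in> P"
  then have "x ^ n \<in> principal R \<alpha>"
    using power_mem_ideal_pow assms(2) by metis
  then have "x ^ n \<in> Q"
    using assms(3,4) by (auto simp: principal_def prime_ideal_def int_ideal_def O_submodule_def mult.commute)
  then show "x \<in> Q"
    using prime_ideal_power_mem[OF assms(4)] \<open>x \<in> P\<close> assms(1) by blast
qed

end

lemma imag_quad_disc_neg: "imag_quad_disc D \<Longrightarrow> D < 0"
  by (simp add: imag_quad_disc_def)

lemma imag_quad_disc_four_dvd: "imag_quad_disc D \<Longrightarrow> 4 dvd D\<^sup>2 - D"
proof -
  assume "imag_quad_disc D"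
  define q r where "q = D div 4" and "r = D mod 4"
  have "r * (r - 1) = 0"
    using \<open>imag_quad_disc D\<close> by (auto simp: imag_quad_disc_def r_def)
  moreover have "D = 4 * q + r"
    by (simp add: q_def r_def)
  then have "D\<^sup>2 - D = 4 * (4 * q\<^sup>2 + 2 * q * r - q) + r * (r - 1)"
    by (simp add: power2_eq_square algebra_simps)
  ultimately show ?thesis
    by (metis add.right_neutral dvd_triv_left)
qed

lemma Re_quad_tau [simp]: "Re (quad_tau D) = of_int D / 2"
  by (simp add: quad_tau_def)

lemma Im_quad_tau [simp]: "Im (quad_tau D) = sqrt (of_int (- D)) / 2"
  by (simp add: quad_tau_def)

lemma cnj_quad_tau: "cnj (quad_tau D) = of_int D - quad_tau D"
  by (simp add: complex_eq_iff)

lemma quad_tau_sq: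
  assumes "D \<le> 0"
  shows "quad_tau D ^ 2 = of_int D * quad_tau D - of_int (D\<^sup>2 - D) / 4"
proof -
  have "2 * quad_tau D - of_int D = \<i> * of_real (sqrt (of_int (- D)))"
    by (simp add: complex_eq_iff)
  then have "(2 * quad_tau D - of_int D) ^ 2 = of_int D"
    using assms by (simp add: power_mult_distrib flip: of_real_power)
  then show ?thesis
    by (simp add: power2_eq_square field_simps)
qed

lemma mem_quad_order_iff: "z \<in> quad_order D \<longleftrightarrow> (\<exists>a b. z = of_int a + of_int b * quad_tau D)"
  by (auto simp: quad_order_def)

lemma complex_subring_quad_order:
  assumes "imag_quad_disc D"
  shows "complex_subring (quad_order D)"
proof
  show "1 \<in> quad_order D"
    unfolding mem_quad_order_iff by (rule exI[of _ 1], rule exI[of _ 0]) simp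
  fix x y assume "x \<in> quad_order D" "y \<in> quad_order D"
  then obtain a b c d where x: "x = of_int a + of_int b * quad_tau D"
    and y: "y = of_int c + of_int d * quad_tau D"
    unfolding mem_quad_order_iff by blast
  have "x - y = of_int (a - c) + of_int (b - d) * quad_tau D"
    unfolding x y by (simp add: algebra_simps)
  then show "x - y \<in> quad_order D"
    unfolding mem_quad_order_iff by blast
  obtain k where k: "D\<^sup>2 - D = 4 * k"
    using imag_quad_disc_four_dvd[OF assms] by blast
  have "x * y = of_int (a * c) + of_int (a * d + b * c) * quad_tau D + of_int (b * d) * quad_tau D ^ 2"
    unfolding x y by (simp add: algebra_simps power2_eq_square)
  also have "\<dots> = of_int (a * c - b * d * k) + of_int (a * d + b * c + b * d * D) * quad_tau D"
    using imag_quad_disc_neg[OF assms] by (simp add: quad_tau_sq k algebra_simps)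
  finally show "x * y \<in> quad_order D"
    unfolding mem_quad_order_iff by blast
qed

lemma cnj_mem_quad_order: "z \<in> quad_order D \<Longrightarrow> cnj z \<in> quad_order D"
proof -
  assume "z \<in> quad_order D"
  then obtain a b where "z = of_int a + of_int b * quad_tau D"
    unfolding mem_quad_order_iff by blast
  then have "cnj z = of_int (a + b * D) + of_int (- b) * quad_tau D"
    by (simp add: cnj_quad_tau algebra_simps)
  then show ?thesis
    unfolding mem_quad_order_iff by blast
qed

lemma quad_order_real_Ints:
  assumes "D < 0" "z \<in> quad_order D" "Im z = 0"
  shows "z \<in> \<int>"
proof -
  obtain a b where z: "z = of_int a + of_int b * quad_tau D"
    using assms(2) unfolding mem_quad_order_iff by blast
  then have "b = 0"
    using assms(1,3) by simp
  then show ?thesis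
    using z by simp
qed

lemma quad_order_norm_ge_1:
  assumes "imag_quad_disc D" "z \<in> quad_order D" "z \<noteq> 0"
  shows "1 \<le> cmod z"
proof -
  interpret complex_subring "quad_order D"
    using complex_subring_quad_order[OF assms(1)] .
  txt \<open>The order is closed under conjugation, so \<open>cmod z ^ 2 = z * cnj z\<close> is a real
    element of it, i.e. a positive integer.\<close>
  have "z * cnj z \<in> quad_order D"
    using assms(2) cnj_mem_quad_order by (blast intro: mult_mem)
  then have "z * cnj z \<in> \<int>"
    using quad_order_real_Ints imag_quad_disc_neg[OF assms(1)] by simp
  then have "complex_of_real (cmod z ^ 2) \<in> \<int>"
    by (simp add: complex_norm_square[symmetric])
  then obtain k :: int where "cmod z ^ 2 = of_int k"
    by (metis Ints_cases of_real_of_int_eq of_real_eq_iff)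
  moreover have "0 < cmod z ^ 2"
    using assms(3) by simp
  ultimately have "1 \<le> cmod z ^ 2"
    by simp
  then show ?thesis
    by (metis norm_ge_zero one_power2 power2_le_imp_le)
qed

lemma quad_order_short_element:
  assumes "D < 0" "z \<in> quad_order D" "4 * cmod z ^ 2 \<le> - of_int D"
  shows "z \<in> \<int> \<or> 4 * z ^ 2 = of_int D"
proof -
  obtain a b where z: "z = of_int a + of_int b * quad_tau D"
    using assms(2) unfolding mem_quad_order_iff by blast
  show ?thesis
  proof (cases "b = 0")
    case True
    then show ?thesis using z by simp
  next
    case False
    then have "1 \<le> (of_int b :: real)\<^sup>2"
      by (metis of_int_1_le_iff of_int_power zero_less_power2 int_one_le_iff_zero_less)
    then have "- of_int D \<le> (of_int b)\<^sup>2 * (- of_int D :: real)"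
      using assms(1) by (simp add: mult_le_cancel_right1)
    also have "\<dots> = 4 * (Im z)\<^sup>2"
      using assms(1) by (simp add: z power_mult_distrib power_divide)
    finally have "- of_int D \<le> 4 * (Im z)\<^sup>2" .
    moreover have "cmod z ^ 2 = (Re z)\<^sup>2 + (Im z)\<^sup>2"
      by (simp add: cmod_power2)
    ultimately have "(Re z)\<^sup>2 \<le> 0" "4 * (Im z)\<^sup>2 = - of_int D"
      using assms(3) zero_le_power2[of "Re z"] by linarith+
    then have "Re z = 0" "4 * (Im z)\<^sup>2 = - of_int D"
      by simp_all
    then have "4 * z ^ 2 = of_int D"
      by (simp add: complex_eq_iff power2_eq_square)
    then show ?thesis ..
  qed
qed

lemma quad_order_powers_cong:
  assumes "imag_quad_disc D" "0 < l" "x \<in> quad_order D"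
  shows "\<exists>i m. 0 < m \<and> x ^ (i + m) - x ^ i \<in> principal (quad_order D) (of_nat l)"
proof -
  interpret complex_subring "quad_order D"
    using complex_subring_quad_order[OF assms(1)] .
  have "\<forall>k. \<exists>p. x ^ k = of_int (fst p) + of_int (snd p) * quad_tau D"
    using power_mem[OF assms(3)] unfolding mem_quad_order_iff by auto
  then obtain f where f: "\<And>k. x ^ k = of_int (fst (f k)) + of_int (snd (f k)) * quad_tau D"
    by metis
  txt \<open>Pigeonhole: the coordinates of the powers of \<open>x\<close> modulo \<open>l\<close> take finitely many values.\<close>
  define residues where "residues k = (fst (f k) mod int l, snd (f k) mod int l)" for k
  have "residues ` UNIV \<subseteq> {0..<int l} \<times> {0..<int l}"
    using assms(2) by (auto simp: residues_def)
  then have "\<not> inj residues"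
    using finite_imageD finite_subset infinite_UNIV_nat by blast
  then obtain i j where "i < j" "residues i = residues j"
    unfolding inj_def by (metis linorder_neqE_nat)
  then obtain c d where "fst (f j) - fst (f i) = int l * c" "snd (f j) - snd (f i) = int l * d"
    unfolding residues_def by (metis dvdE mod_eq_dvd_iff prod.inject)
  then have "x ^ j - x ^ i = of_nat l * (of_int c + of_int d * quad_tau D)"
    using f[of i] f[of j] by (simp add: algebra_simps flip: of_int_diff)
  moreover have "of_int c + of_int d * quad_tau D \<in> quad_order D"
    unfolding mem_quad_order_iff by blast
  then have "of_nat l * (of_int c + of_int d * quad_tau D) \<in> principal (quad_order D) (of_nat l)"
    unfolding principal_def by (rule imageI)
  ultimately have "x ^ (i + (j - i)) - x ^ i \<in> principal (quad_order D) (of_nat l)"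
    using \<open>i < j\<close> by simp
  then show ?thesis
    using \<open>i < j\<close> zero_less_diff by blast
qed

lemma quad_order_prime_ideal_eq_if_subset:
  assumes "imag_quad_disc D" "0 < l"
    and "prime_ideal (quad_order D) P" "prime_ideal (quad_order D) Q"
    and "principal (quad_order D) (of_nat l) \<subseteq> P" "P \<subseteq> Q"
  shows "P = Q"
proof -
  interpret complex_subring "quad_order D"
    using complex_subring_quad_order[OF assms(1)] .
  have "x \<in> P" if "x \<in> Q" for x
  proof (rule ccontr)
    assume "x \<notin> P"
    have x: "x \<in> quad_order D"
      using assms(4) that by (auto simp: prime_ideal_def int_ideal_def)
    obtain i m where "0 < m" and cong: "x ^ (i + m) - x ^ i \<in> principal (quad_order D) (of_nat l)"
      using quad_order_powers_cong[OF assms(1,2) x] by blast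
    have "x ^ i * (x ^ m - 1) \<in> P"
      using cong assms(5) by (auto simp: power_add algebra_simps)
    moreover have "x ^ i \<notin> P"
      using prime_ideal_power_mem[OF assms(3) x] \<open>x \<notin> P\<close> by blast
    ultimately have "x ^ m - 1 \<in> P"
      using assms(3) power_mem[OF x] diff_mem[OF power_mem[OF x] one_mem]
      unfolding prime_ideal_def by blast
    have Q: "O_submodule (quad_order D) Q"
      using assms(4) by (simp add: prime_ideal_def int_ideal_def)
    have "x ^ m \<in> Q"
      using O_submodule_mult_mem[OF Q power_mem[OF x] that, of "m - 1"] \<open>0 < m\<close>
      by (cases m) (simp_all add: mult.commute)
    then have "x ^ m - (x ^ m - 1) \<in> Q"
      using O_submodule_diff_mem[OF Q] \<open>x ^ m - 1 \<in> P\<close> assms(6) by blast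
    then have "1 \<in> Q"
      by simp
    then show False
      using prime_ideal_one_notin[OF assms(4)] by blast
  qed
  then show ?thesis
    using assms(6) by blast
qed

lemma small_element_mem_other_prime:
  assumes "imag_quad_disc D" "prime l" "0 < n"
    and "prime_ideal (quad_order D) P" "prime_ideal (quad_order D) Q"
    and "of_nat l \<in> P" "principal (quad_order D) (of_nat l) \<subseteq> Q"
    and "\<alpha> \<in> P" "cmod \<alpha> ^ 2 \<le> real l ^ n" "4 * int l ^ n \<le> - D"
  shows "\<alpha> \<in> Q"
proof -
  interpret complex_subring "quad_order D"
    using complex_subring_quad_order[OF assms(1)] .
  have \<alpha>: "\<alpha> \<in> quad_order D"
    using assms(4,8) by (auto simp: prime_ideal_def int_ideal_def)
  have D: "real_of_int D < 0"
    using imag_quad_disc_neg[OF assms(1)] by simp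
  have "real_of_int (4 * int l ^ n) \<le> real_of_int (- D)"
    using assms(10) by (simp only: of_int_le_iff)
  then have big: "4 * real l ^ n \<le> - of_int D"
    by simp
  then consider "\<alpha> \<in> \<int>" | "4 * \<alpha> ^ 2 = of_int D"
    using quad_order_short_element imag_quad_disc_neg[OF assms(1)] \<alpha> assms(9) by fastforce
  then have "\<alpha> ^ 2 \<in> principal (quad_order D) (of_nat l)"
  proof cases
    case 1
    then obtain a where a: "\<alpha> = of_int a"
      by (elim Ints_cases)
    then obtain k where "a = int l * k"
      using prime_ideal_int_dvd[OF assms(4,2,6)] assms(8) by (metis dvdE)
    then have "\<alpha> ^ 2 = of_nat l * (of_int (k * a))"
      using a by (simp add: power2_eq_square)
    then show ?thesis
      unfolding principal_def using of_int_mem by (rule image_eqI)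
  next
    case 2
    have "4 * cmod \<alpha> ^ 2 = cmod (4 * \<alpha> ^ 2)"
      by (simp add: norm_mult norm_power)
    also have "\<dots> = - of_int D"
      using 2 D by simp
    finally have "real_of_int D = real_of_int (- 4 * int l ^ n)"
      using assms(9) big by simp
    then have "4 * \<alpha> ^ 2 = 4 * (- (of_nat l ^ n))"
      using 2 by (simp only: of_int_eq_iff) simp
    also have "\<dots> = 4 * (of_nat l * - (of_nat l ^ (n - 1)))"
      using assms(3) by (cases n) simp_all
    finally have "\<alpha> ^ 2 = of_nat l * - (of_nat l ^ (n - 1))"
      by simp
    then show ?thesis
      unfolding principal_def using uminus_mem[OF power_mem[OF of_nat_mem]] by (rule image_eqI)
  qed
  then show ?thesis
    using prime_ideal_power_mem[OF assms(5) \<alpha>] assms(7) by blast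
qed

lemma split_primes_eq_if_small_generator:
  assumes "imag_quad_disc D" "prime l" "0 < n"
    and "prime_ideal (quad_order D) P" "prime_ideal (quad_order D) Q"
    and "ideal_prod P Q = principal (quad_order D) (of_nat l)"
    and "ideal_pow (quad_order D) P n = principal (quad_order D) \<alpha>"
    and "cmod \<alpha> ^ 2 \<le> real l ^ n" "4 * int l ^ n \<le> - D"
  shows "P = Q"
proof -
  interpret complex_subring "quad_order D"
    using complex_subring_quad_order[OF assms(1)] .
  have P: "int_ideal (quad_order D) P" and Q: "int_ideal (quad_order D) Q"
    using assms(4,5) by (simp_all add: prime_ideal_def)
  have l: "principal (quad_order D) (of_nat l) \<subseteq> P \<inter> Q"
    using ideal_prod_subset_Int[OF P Q] assms(6) by simp
  have "of_nat l \<in> principal (quad_order D) (of_nat l)" "\<alpha> \<in> principal (quad_order D) \<alpha>"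
    unfolding principal_def using one_mem by (metis image_eqI mult_1_right)+
  then have "of_nat l \<in> P" "\<alpha> \<in> P"
    using l ideal_pow_subset[OF P assms(3)] assms(7) by auto
  then have "\<alpha> \<in> Q"
    using small_element_mem_other_prime[OF assms(1-5)] l assms(8,9) by blast
  then have "P \<subseteq> Q"
    using prime_ideal_subset_if_ideal_pow_principal assms(5,7) P by (auto simp: int_ideal_def)
  moreover have "0 < l"
    using assms(2) by (simp add: prime_gt_0_nat)
  ultimately show ?thesis
    using quad_order_prime_ideal_eq_if_subset[OF assms(1) _ assms(4,5)] l by blast
qed

lemma ideal_pow_generators_norm_le:
  assumes "imag_quad_disc D" "0 < l"
    and "ideal_prod P Q = principal (quad_order D) (of_nat l)"
    and "ideal_pow (quad_order D) P n = principal (quad_order D) \<alpha>"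
    and "ideal_pow (quad_order D) Q n = principal (quad_order D) \<beta>"
  shows "cmod \<alpha> * cmod \<beta> \<le> real l ^ n"
proof -
  interpret complex_subring "quad_order D"
    using complex_subring_quad_order[OF assms(1)] .
  have "of_nat l \<in> ideal_prod P Q"
    unfolding assms(3) principal_def using one_mem by (metis image_eqI mult_1_right)
  have "of_nat l ^ n \<in> principal (quad_order D) (\<alpha> * \<beta>)"
    using power_mem_ideal_prod_ideal_pow[OF \<open>of_nat l \<in> ideal_prod P Q\<close>, of n] principal_prod_subset[of \<alpha> \<beta>] assms(4,5)
    by auto
  then obtain \<delta> where \<delta>: "\<delta> \<in> quad_order D" "of_nat l ^ n = \<alpha> * \<beta> * \<delta>"
    by (auto simp: principal_def)
  then have "1 \<le> cmod \<delta>"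
    using quad_order_norm_ge_1[OF assms(1)] assms(2) by force
  then have "cmod \<alpha> * cmod \<beta> \<le> cmod (\<alpha> * \<beta> * \<delta>)"
    using mult_left_mono[of 1 "cmod \<delta>" "cmod \<alpha> * cmod \<beta>"] by (simp add: norm_mult)
  also have "\<dots> = real l ^ n"
    by (simp flip: \<delta>(2) add: norm_power)
  finally show ?thesis .
qed

theorem lemma5p2:
  fixes D :: int and l n :: nat and P Q :: "complex set"
  assumes "prime l" and "n > 0"
    and "imag_quad_disc D"
    and "coprime (int l) (conductor D)"
    and "prime_ideal (quad_order D) P" and "prime_ideal (quad_order D) Q" and "P \<noteq> Q"
    and "ideal_prod P Q = principal (quad_order D) (of_nat l)"
    and "class_order (quad_order D) P n" and "class_order (quad_order D) Q n"
  shows "\<bar>D\<bar> \<le> 4 * int l ^ n - 1"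
proof (rule ccontr)
  assume "\<not> ?thesis"
  then have big: "4 * int l ^ n \<le> - D"
    using imag_quad_disc_neg[OF assms(3)] by simp
  obtain \<alpha> \<beta> where \<alpha>: "ideal_pow (quad_order D) P n = principal (quad_order D) \<alpha>"
    and \<beta>: "ideal_pow (quad_order D) Q n = principal (quad_order D) \<beta>"
    using assms(9,10) by (auto simp: class_order_def is_principal_def)
  have norms: "cmod \<alpha> * cmod \<beta> \<le> real l ^ n"
    using ideal_pow_generators_norm_le[OF assms(3) _ assms(8) \<alpha> \<beta>] prime_gt_0_nat[OF assms(1)] .
  consider "cmod \<alpha> ^ 2 \<le> real l ^ n" | "cmod \<beta> ^ 2 \<le> real l ^ n"
    using norms mult_left_mono[of "cmod \<alpha>" "cmod \<beta>" "cmod \<alpha>"] mult_right_mono[of "cmod \<beta>" "cmod \<alpha>" "cmod \<beta>"]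
    by (fastforce simp: power2_eq_square)
  then show False
  proof cases
    case 1
    then show False
      using split_primes_eq_if_small_generator[OF assms(3,1,2,5,6,8) \<alpha> _ big] assms(7) by blast
  next
    case 2
    then show False
      using split_primes_eq_if_small_generator[OF assms(3,1,2,6,5) _ \<beta> _ big] assms(7,8)
      by (simp add: ideal_prod_commute)
  qed
qed

end
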